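(* In the social learning model described in the context, with probability $1$ it holds that $\lim_{t\to\infty} \ell_t/t = 0$.
   Context: Social learning model. A state $\theta\in\{-1,+1\}$ is drawn with $\mathbb{P}(\theta=+1)=\mathbb{P}(\theta=-1)=1/2$. Agents $t=1,2,\dots$ receive private signals $s_t\in\mathbb{R}$ that are i.i.d. conditionally on $\theta$, with CDF $F_+$ if $\theta=+1$ and $F_-$ if $\theta=-1$; $F_+$ and $F_-$ are mutually absolutely continuous. Let $L_t=\log\frac{\mathbb{P}(\theta=+1\mid s_t)}{\mathbb{P}(\theta=-1\mid s_t)}$ be the private log-likelihood ratio, and let $G_+$, $G_-$ denote the CDFs of $L_t$ conditional on $\theta=+1$, $\theta=-1$ respectively. Signals are assumed unbounded: for every $M\in\mathbb{R}$, $\mathbb{P}(L_t>M)>0$ and $\mathbb{P}(L_t<-M)>0$. Agent $t$ observes $a_1,\dots,a_{t-1}$ and her own signal and chooses $a_t\in\{-1,+1\}$ (utility $1$ if $a_t=\theta$, else $0$). The public belief is $\mu_t=\mathbb{P}(\theta=+1\mid a_1,\dots,a_{t-1})$ and $\ell_t=\log\frac{\mu_t}{1-\mu_t}$ (so $\ell_1=0$). In equilibrium $a_t=+1$ iff $\ell_t+L_t>0$, and otherwise $a_t=-1$. Consequently $\ell_{t+1}=\ell_t+D_+(\ell_t)$ if $a_t=+1$ and $\ell_{t+1}=\ell_t+D_-(\ell_t)$ if $a_t=-1$, where $D_+(x)=\log\frac{1-G_+(-x)}{1-G_-(-x)}$ and $D_-(x)=\log\frac{G_+(-x)}{G_-(-x)}$.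 We write $\mathbb{P}_+(\cdot)=\mathbb{P}(\cdot\mid\theta=+1)$ and $\mathbb{E}_+$ for the corresponding expectation. *)

theory Defs
  imports "HOL-Probability.Probability"
begin

definition llr_cdf :: "real measure \<Rightarrow> (real \<Rightarrow> real) \<Rightarrow> real \<Rightarrow> real" where
  "llr_cdf F L x = measure F {s \<in> space F. L s \<le> x}"

definition D_plus :: "real measure \<Rightarrow> real measure \<Rightarrow> (real \<Rightarrow> real) \<Rightarrow> real \<Rightarrow> real" where
  "D_plus Fp Fm L x = ln ((1 - llr_cdf Fp L (- x)) / (1 - llr_cdf Fm L (- x)))"

definition D_minus :: "real measure \<Rightarrow> real measure \<Rightarrow> (real \<Rightarrow> real) \<Rightarrow> real \<Rightarrow> real" where
  "D_minus Fp Fm L x = ln (llr_cdf Fp L (- x) / llr_cdf Fm L (- x))"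

text \<open>Public log-likelihood ratio and actions, zero-indexed:
  pub_llr ... n = l_{n+1}, action ... n = a_{n+1}; sig n is the signal of agent n+1.\<close>
fun pub_llr :: "real measure \<Rightarrow> real measure \<Rightarrow> (real \<Rightarrow> real) \<Rightarrow> (nat \<Rightarrow> real) \<Rightarrow> nat \<Rightarrow> real"
and action :: "real measure \<Rightarrow> real measure \<Rightarrow> (real \<Rightarrow> real) \<Rightarrow> (nat \<Rightarrow> real) \<Rightarrow> nat \<Rightarrow> int" where
  "pub_llr Fp Fm L sig 0 = 0"
| "pub_llr Fp Fm L sig (Suc n) =
     (if action Fp Fm L sig n = 1
      then pub_llr Fp Fm L sig n + D_plus Fp Fm L (pub_llr Fp Fm L sig n)
      else pub_llr Fp Fm L sig n + D_minus Fp Fm L (pub_llr Fp Fm L sig n))"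
| "action Fp Fm L sig n = (if pub_llr Fp Fm L sig n + L (sig n) > 0 then 1 else -1)"

end

theory Submission
  imports Defs
begin

text \<open>The public belief \<open>logistic \<ell>\<^sub>t\<close> is a bounded martingale under the uniform mixture of the
  two states, so the expected sum of its squared increments is finite and, almost surely, these
  increments tend to \<open>0\<close>. With unbounded signals, every action moves the belief by an amount
  bounded away from \<open>0\<close> as long as \<open>\<ell>\<^sub>t\<close> stays bounded; hence \<open>|\<ell>\<^sub>t| \<rightarrow> \<infinity>\<close>. The sign of
  \<open>\<ell>\<^sub>t\<close> then freezes, so eventually every step is \<open>D\<^sub>+(\<ell>\<^sub>t)\<close> with \<open>\<ell>\<^sub>t \<rightarrow> \<infinity>\<close> (or \<open>D\<^sub>-(\<ell>\<^sub>t)\<close>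
  with \<open>\<ell>\<^sub>t \<rightarrow> -\<infinity>\<close>), which tends to \<open>0\<close>, and \<open>\<ell>\<^sub>t / t \<rightarrow> 0\<close> follows by Cesaro averaging.
  Almost-sure statements are proved under the i.i.d. signal laws of each state separately and
  then transferred to the mixture.\<close>

section \<open>Logistic function and Cesaro means\<close>

definition logistic :: "real \<Rightarrow> real" where
  "logistic x = exp x / (1 + exp x)"

lemma one_add_exp_pos [simp]: "0 < 1 + exp (x :: real)"
  and one_add_exp_neq_zero [simp]: "1 + exp (x :: real) \<noteq> 0"
  using exp_gt_zero[of x] by linarith+

lemma logistic_eq_1_minus: "logistic x = 1 - 1 / (1 + exp x)"
  by (simp add: logistic_def field_simps)

lemma strict_mono_logistic: "strict_mono logistic"
  by (rule strict_monoI) (simp add: logistic_eq_1_minus frac_less2 add_pos_pos)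

lemma logistic_less_iff [simp]: "logistic x < logistic y \<longleftrightarrow> x < y"
  using strict_mono_logistic by (rule strict_mono_less)

lemma logistic_bounds: "0 \<le> logistic x" "logistic x \<le> 1"
  unfolding logistic_def by (auto simp: divide_le_eq)

lemma abs_logistic_add_ln_ratio_ge:
  assumes a: "0 < a" "a \<le> 1" and b: "0 < b" "b \<le> 1"
  shows "exp l * \<bar>a - b\<bar> / (1 + exp l)\<^sup>2 \<le> \<bar>logistic (l + ln (a / b)) - logistic l\<bar>"
proof -
  define e where "e = exp l"
  have e: "0 < e" unfolding e_def by simp
  have "0 < e * a" "e * a \<le> e" using a e by (simp_all add: mult_left_le)
  then have denom: "0 < b + e * a" "b + e * a \<le> 1 + e" using b by linarith+
  have "logistic (l + ln (a / b)) - logistic l = e * (a - b) / ((b + e * a) * (1 + e))"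
    using a b e denom by (simp add: logistic_def exp_add e_def[symmetric] field_simps)
  then have "\<bar>logistic (l + ln (a / b)) - logistic l\<bar> = e * \<bar>a - b\<bar> / ((b + e * a) * (1 + e))"
    using e denom by (simp add: abs_mult)
  moreover have "e * \<bar>a - b\<bar> / ((1 + e) * (1 + e)) \<le> e * \<bar>a - b\<bar> / ((b + e * a) * (1 + e))"
    using e denom by (intro divide_left_mono mult_right_mono mult_pos_pos) auto
  ultimately show ?thesis by (simp add: e_def power2_eq_square)
qed

lemma tendsto_at_top_or_at_bot_if_logistic_increments_tendsto_0:
  fixes l :: "nat \<Rightarrow> real"
  assumes abs_l: "filterlim (\<lambda>n. \<bar>l n\<bar>) at_top sequentially"
    and incr: "(\<lambda>n. logistic (l (Suc n)) - logistic (l n)) \<longlonglongrightarrow> 0"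
  shows "filterlim l at_top sequentially \<or> filterlim l at_bot sequentially"
proof -
  define d where "d = logistic 1 - logistic (-1)"
  have "0 < d" by (simp add: d_def)
  have "eventually (\<lambda>n. 1 < \<bar>l n\<bar>) sequentially"
    using abs_l by (simp add: filterlim_at_top_dense)
  moreover from this have "eventually (\<lambda>n. 1 < \<bar>l (Suc n)\<bar>) sequentially"
    by (rule eventually_sequentially_Suc[THEN iffD2])
  moreover have "eventually (\<lambda>n. \<bar>logistic (l (Suc n)) - logistic (l n)\<bar> < d) sequentially"
    using tendstoD[OF incr \<open>0 < d\<close>] by (simp add: dist_real_def)
  ultimately have "eventually (\<lambda>n.
      1 < \<bar>l n\<bar> \<and> 1 < \<bar>l (Suc n)\<bar> \<and> \<bar>logistic (l (Suc n)) - logistic (l n)\<bar> < d) sequentially"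
    by (intro eventually_conj)
  then obtain N where N: "\<And>n. N \<le> n \<Longrightarrow>
      1 < \<bar>l n\<bar> \<and> 1 < \<bar>l (Suc n)\<bar> \<and> \<bar>logistic (l (Suc n)) - logistic (l n)\<bar> < d"
    unfolding eventually_sequentially by blast
  have keep_sign: "0 < l (Suc n) \<longleftrightarrow> 0 < l n" if "N \<le> n" for n
  proof (rule ccontr)
    assume "\<not> ?thesis"
    with N[OF that] have "(l n < -1 \<and> 1 < l (Suc n)) \<or> (l (Suc n) < -1 \<and> 1 < l n)" by linarith
    then have "d \<le> \<bar>logistic (l (Suc n)) - logistic (l n)\<bar>"
    proof
      assume "l n < -1 \<and> 1 < l (Suc n)"
      then have "logistic (l n) < logistic (-1)" "logistic 1 < logistic (l (Suc n))" by simp_all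
      then show ?thesis unfolding d_def by linarith
    next
      assume "l (Suc n) < -1 \<and> 1 < l n"
      then have "logistic (l (Suc n)) < logistic (-1)" "logistic 1 < logistic (l n)" by simp_all
      then show ?thesis unfolding d_def by linarith
    qed
    with N[OF that] show False by simp
  qed
  have sign: "0 < l n \<longleftrightarrow> 0 < l N" if "N \<le> n" for n
    using that by (induction n rule: dec_induct) (auto simp: keep_sign)
  show ?thesis
  proof (cases "0 < l N")
    case True
    then have "eventually (\<lambda>n. \<bar>l n\<bar> = l n) sequentially"
      using sign unfolding eventually_sequentially by (metis abs_of_pos)
    then have "filterlim l at_top sequentially"
      using abs_l by (simp add: filterlim_cong)
    then show ?thesis ..
  next
    case False
    then have "eventually (\<lambda>n. \<bar>l n\<bar> = - l n) sequentially"
      using sign N unfolding eventually_sequentially by (metis abs_of_neg abs_of_nonneg not_less less_trans zero_less_one)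
    then have "filterlim (\<lambda>n. - l n) at_top sequentially"
      using abs_l by (simp add: filterlim_cong)
    then show ?thesis by (simp add: filterlim_uminus_at_bot)
  qed
qed

lemma abs_diff_le_if_increments_le:
  fixes f :: "nat \<Rightarrow> real"
  assumes incr: "\<And>n. N \<le> n \<Longrightarrow> \<bar>f (Suc n) - f n\<bar> \<le> r" and "N \<le> n"
  shows "\<bar>f n - f N\<bar> \<le> r * real (n - N)"
  using \<open>N \<le> n\<close>
proof (induction n rule: dec_induct)
  case (step n)
  have "\<bar>f (Suc n) - f N\<bar> \<le> \<bar>f (Suc n) - f n\<bar> + \<bar>f n - f N\<bar>" by linarith
  also have "\<dots> \<le> r + r * real (n - N)" using incr[OF step.hyps(1)] step.IH by linarith
  also have "\<dots> = r * real (Suc n - N)" using step.hyps(1) by (simp add: Suc_diff_le algebra_simps)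
  finally show ?case .
qed simp

lemma LIMSEQ_div_Suc_zero_if_increments_tendsto_zero:
  fixes f :: "nat \<Rightarrow> real"
  assumes "(\<lambda>n. f (Suc n) - f n) \<longlonglongrightarrow> 0"
  shows "(\<lambda>n. f n / real (Suc n)) \<longlonglongrightarrow> 0"
proof (rule LIMSEQ_I)
  fix r :: real assume r: "0 < r"
  obtain N where N: "\<And>n. N \<le> n \<Longrightarrow> \<bar>f (Suc n) - f n\<bar> \<le> r / 2"
    using LIMSEQ_D[OF assms, of "r / 2"] r by (auto intro: less_imp_le)
  obtain M where M: "2 * \<bar>f N\<bar> / r < real M" using reals_Archimedean2 by blast
  have "\<bar>f n\<bar> < r * real (Suc n)" if n: "max N M \<le> n" for n
  proof -
    have "2 * \<bar>f N\<bar> / r < real (Suc n)" using M n by linarith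
    then have "\<bar>f N\<bar> < r / 2 * real (Suc n)" using r by (simp add: field_simps)
    moreover have "r / 2 * real (n - N) \<le> r / 2 * real (Suc n)" using r by simp
    moreover have "\<bar>f n - f N\<bar> \<le> r / 2 * real (n - N)"
      by (intro abs_diff_le_if_increments_le N) (use n in auto)
    ultimately show ?thesis by linarith
  qed
  then show "\<exists>n0. \<forall>n\<ge>n0. norm (f n / real (Suc n) - 0) < r"
    by (auto simp: abs_divide divide_less_eq simp del: of_nat_Suc intro!: exI[of _ "max N M"])
qed

section \<open>Distribution of the private log-likelihood ratio\<close>

lemma llr_cdf_eq_cdf_distr:
  assumes "sets F = sets borel" and "L \<in> borel_measurable borel"
  shows "llr_cdf F L = cdf (distr F borel L)"
proof
  fix x
  have "L \<in> borel_measurable F" using assms(2) by (simp add: measurable_cong_sets[OF assms(1) refl])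
  moreover have "L -` {..x} \<inter> space F = {s \<in> space F. L s \<le> x}" by auto
  ultimately show "llr_cdf F L x = cdf (distr F borel L) x"
    by (simp add: llr_cdf_def cdf_def measure_distr)
qed

lemma llr_cdf_tendsto:
  assumes "prob_space F" and "sets F = sets borel" and "L \<in> borel_measurable borel"
  shows "(llr_cdf F L \<longlongrightarrow> 1) at_top" and "(llr_cdf F L \<longlongrightarrow> 0) at_bot"
proof -
  interpret prob_space F by fact
  interpret D: real_distribution "distr F borel L"
    using assms(3) by (intro real_distribution_distr) (simp add: measurable_cong_sets[OF assms(2) refl])
  show "(llr_cdf F L \<longlongrightarrow> 1) at_top" "(llr_cdf F L \<longlongrightarrow> 0) at_bot"
    unfolding llr_cdf_eq_cdf_distr[OF assms(2,3)]
    by (rule D.cdf_lim_at_top_prob D.cdf_lim_at_bot)+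
qed

lemma measure_llr_greater:
  assumes "prob_space F" and "sets F = sets borel" and "L \<in> borel_measurable borel"
  shows "measure F {y. c < L y} = 1 - llr_cdf F L c"
proof -
  interpret prob_space F by fact
  have space: "space F = UNIV" using sets_eq_imp_space_eq[OF assms(2)] by simp
  have "{y. L y \<le> c} \<in> sets borel" using assms(3) by measurable
  then have "{y. L y \<le> c} \<in> sets F" using assms(2) by simp
  then have "measure F (space F - {y. L y \<le> c}) = 1 - measure F {y. L y \<le> c}" by (rule prob_compl)
  moreover have "space F - {y. L y \<le> c} = {y. c < L y}" by (auto simp: space)
  ultimately show ?thesis by (simp add: llr_cdf_def space)
qed

locale llr_signals =
  Fp: prob_space Fp + Fm: prob_space Fm for Fp Fm :: "real measure" +
  fixes L :: "real \<Rightarrow> real"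
  assumes sets_Fp: "sets Fp = sets borel" and sets_Fm: "sets Fm = sets borel"
    and L_measurable [measurable]: "L \<in> borel_measurable borel"
    and Fp_density: "Fp = density Fm (\<lambda>y. ennreal (exp (L y)))"
    and null_sets_Fp_subset: "absolutely_continuous Fp Fm"
    and unbounded_above: "\<And>K. 0 < measure Fm {y. K < L y}"
    and unbounded_below: "\<And>K. 0 < measure Fm {y. L y < K}"
begin

abbreviation "Gp \<equiv> llr_cdf Fp L"
abbreviation "Gm \<equiv> llr_cdf Fm L"
abbreviation "Dp \<equiv> D_plus Fp Fm L"
abbreviation "Dm \<equiv> D_minus Fp Fm L"

lemma space_Fp [simp]: "space Fp = UNIV" and space_Fm [simp]: "space Fm = UNIV"
  using sets_eq_imp_space_eq[OF sets_Fp] sets_eq_imp_space_eq[OF sets_Fm] by simp_all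

lemma llr_cdf_eq: "Gp c = measure Fp {y. L y \<le> c}" "Gm c = measure Fm {y. L y \<le> c}"
  by (simp_all add: llr_cdf_def)

lemma measure_llr_greater_eq:
  "measure Fp {y. c < L y} = 1 - Gp c" "measure Fm {y. c < L y} = 1 - Gm c"
  using measure_llr_greater[OF Fp.prob_space_axioms sets_Fp L_measurable]
    measure_llr_greater[OF Fm.prob_space_axioms sets_Fm L_measurable] by auto

lemma emeasure_Fp: "E \<in> sets borel \<Longrightarrow> emeasure Fp E = (\<integral>\<^sup>+ y. ennreal (exp (L y)) * indicator E y \<partial>Fm)"
  unfolding Fp_density
  by (subst emeasure_density) (auto simp: sets_Fm measurable_cong_sets[OF sets_Fm refl])

lemma measure_Fp_ge:
  assumes E: "E \<in> sets borel" and a: "\<And>y. y \<in> E \<Longrightarrow> a \<le> L y"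
  shows "exp a * measure Fm E \<le> measure Fp E"
proof -
  have "ennreal (exp a) * emeasure Fm E = (\<integral>\<^sup>+ y. ennreal (exp a) * indicator E y \<partial>Fm)"
    using E by (simp add: nn_integral_cmult_indicator sets_Fm)
  also have "\<dots> \<le> emeasure Fp E"
    unfolding emeasure_Fp[OF E] using a by (intro nn_integral_mono) (auto simp: indicator_def)
  finally show ?thesis
    by (simp add: Fp.emeasure_eq_measure Fm.emeasure_eq_measure ennreal_mult'[symmetric])
qed

lemma measure_Fp_le:
  assumes E: "E \<in> sets borel" and a: "\<And>y. y \<in> E \<Longrightarrow> L y \<le> a"
  shows "measure Fp E \<le> exp a * measure Fm E"
proof -
  have "emeasure Fp E \<le> (\<integral>\<^sup>+ y. ennreal (exp a) * indicator E y \<partial>Fm)"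
    unfolding emeasure_Fp[OF E] using a by (intro nn_integral_mono) (auto simp: indicator_def)
  also have "\<dots> = ennreal (exp a) * emeasure Fm E"
    using E by (simp add: nn_integral_cmult_indicator sets_Fm)
  finally show ?thesis
    by (simp add: Fp.emeasure_eq_measure Fm.emeasure_eq_measure ennreal_mult'[symmetric])
qed

lemma llr_cdf_Fm_bounds: "0 < Gm c" "Gm c < 1"
proof -
  have "measure Fm {y. L y < c} \<le> Gm c"
    unfolding llr_cdf_eq by (intro Fm.finite_measure_mono) (auto simp: sets_Fm)
  then show "0 < Gm c" using unbounded_below[of c] by linarith
  show "Gm c < 1" using unbounded_above[of c] measure_llr_greater_eq(2)[of c] by linarith
qed

lemma llr_cdf_Fp_bounds: "0 < Gp c" "Gp c < 1"
proof -
  have events: "{y. L y \<le> c} \<in> sets Fp" "{y. L y \<le> c} \<in> sets Fm" by (simp_all add: sets_Fp sets_Fm)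
  have "\<not> (AE y in Fm. y \<notin> {y. L y \<le> c})"
    using llr_cdf_Fm_bounds(1)[of c] Fm.prob_eq_0[OF events(2)] by (simp add: llr_cdf_eq)
  then have "\<not> (AE y in Fp. y \<notin> {y. L y \<le> c})"
    using absolutely_continuous_AE[OF _ null_sets_Fp_subset] by (auto simp: sets_Fp sets_Fm)
  then show "0 < Gp c"
    using Fp.prob_eq_0[OF events(1)] measure_nonneg[of Fp "{y. L y \<le> c}"]
    by (simp add: llr_cdf_eq zero_less_measure_iff)
  have "0 < exp c * measure Fm {y. c < L y}" using unbounded_above[of c] by simp
  also have "\<dots> \<le> measure Fp {y. c < L y}" by (rule measure_Fp_ge) auto
  finally show "Gp c < 1" by (simp add: measure_llr_greater_eq)
qed

lemma add_D_minus_nonpos: "x + Dm x \<le> 0"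
proof -
  have "Gp (-x) \<le> exp (-x) * Gm (-x)"
    unfolding llr_cdf_eq by (rule measure_Fp_le) auto
  then have "Gp (-x) / Gm (-x) \<le> exp (-x)"
    using llr_cdf_Fm_bounds(1) by (simp add: divide_le_eq mult.commute)
  then have "ln (Gp (-x) / Gm (-x)) \<le> ln (exp (-x))"
    using llr_cdf_Fp_bounds(1) llr_cdf_Fm_bounds(1) by (subst ln_le_cancel_iff) auto
  then show ?thesis by (simp add: D_minus_def)
qed

lemma add_D_plus_nonneg: "0 \<le> x + Dp x"
proof -
  have "exp (-x) * measure Fm {y. -x < L y} \<le> measure Fp {y. -x < L y}"
    by (rule measure_Fp_ge) auto
  then have "exp (-x) \<le> (1 - Gp (-x)) / (1 - Gm (-x))"
    using llr_cdf_Fm_bounds(2)[of "-x"] by (simp add: measure_llr_greater_eq le_divide_eq)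
  then have "ln (exp (-x)) \<le> ln ((1 - Gp (-x)) / (1 - Gm (-x)))"
    using llr_cdf_Fp_bounds(2) llr_cdf_Fm_bounds(2) by (subst ln_le_cancel_iff) auto
  then show ?thesis by (simp add: D_plus_def)
qed

lemma D_plus_tendsto_0: "(Dp \<longlongrightarrow> 0) at_top"
proof -
  have "((\<lambda>x. F (-x)) \<longlongrightarrow> 0) at_top" if "(F \<longlongrightarrow> 0) at_bot" for F :: "real \<Rightarrow> real"
    using filterlim_compose[OF that filterlim_uminus_at_bot_at_top] .
  then have "((\<lambda>x. Gp (-x)) \<longlongrightarrow> 0) at_top" "((\<lambda>x. Gm (-x)) \<longlongrightarrow> 0) at_top"
    using llr_cdf_tendsto(2)[OF Fp.prob_space_axioms sets_Fp L_measurable]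
      llr_cdf_tendsto(2)[OF Fm.prob_space_axioms sets_Fm L_measurable] by blast+
  then have "((\<lambda>x. ln ((1 - Gp (-x)) / (1 - Gm (-x)))) \<longlongrightarrow> ln ((1 - 0) / (1 - 0))) at_top"
    by (intro tendsto_intros) auto
  then show ?thesis by (simp add: D_plus_def[abs_def])
qed

lemma D_minus_tendsto_0: "(Dm \<longlongrightarrow> 0) at_bot"
proof -
  have "((\<lambda>x. F (-x)) \<longlongrightarrow> 1) at_bot" if "(F \<longlongrightarrow> 1) at_top" for F :: "real \<Rightarrow> real"
    using filterlim_compose[OF that filterlim_uminus_at_top_at_bot] .
  then have "((\<lambda>x. Gp (-x)) \<longlongrightarrow> 1) at_bot" "((\<lambda>x. Gm (-x)) \<longlongrightarrow> 1) at_bot"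
    using llr_cdf_tendsto(1)[OF Fp.prob_space_axioms sets_Fp L_measurable]
      llr_cdf_tendsto(1)[OF Fm.prob_space_axioms sets_Fm L_measurable] by blast+
  then have "((\<lambda>x. ln (Gp (-x) / Gm (-x))) \<longlongrightarrow> ln (1 / 1)) at_bot"
    by (intro tendsto_intros) auto
  then show ?thesis by (simp add: D_minus_def[abs_def])
qed

section \<open>Dynamics of the public log-likelihood ratio\<close>

definition cdf_gap :: "real \<Rightarrow> real" where
  "cdf_gap K = min ((exp K - 1) * measure Fm {y. K < L y}) ((1 - exp (-K)) * measure Fm {y. L y < -K})"

lemma cdf_gap_pos: "0 < K \<Longrightarrow> 0 < cdf_gap K"
  unfolding cdf_gap_def using unbounded_above[of K] unbounded_below[of "-K"] by simp

lemma cdf_gap_le: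
  assumes "0 < K" and "\<bar>c\<bar> \<le> K"
  shows "cdf_gap K \<le> Gm c - Gp c"
proof (cases "0 \<le> c")
  case True
  define S1 where "S1 = {y. c < L y \<and> L y \<le> K}"
  define S2 where "S2 = {y. K < L y}"
  have sets: "S1 \<in> sets borel" "S2 \<in> sets borel" by (simp_all add: S1_def S2_def)
  have split: "{y. c < L y} = S1 \<union> S2" "S1 \<inter> S2 = {}" using assms(2) by (auto simp: S1_def S2_def)
  have "measure Fp {y. c < L y} = measure Fp S1 + measure Fp S2"
    unfolding split(1) by (rule Fp.finite_measure_Union) (use sets split in \<open>auto simp: sets_Fp\<close>)
  moreover have "measure Fm {y. c < L y} = measure Fm S1 + measure Fm S2"
    unfolding split(1) by (rule Fm.finite_measure_Union) (use sets split in \<open>auto simp: sets_Fm\<close>)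
  moreover have "exp 0 * measure Fm S1 \<le> measure Fp S1"
    by (rule measure_Fp_ge) (use sets True in \<open>auto simp: S1_def\<close>)
  moreover have "exp K * measure Fm S2 \<le> measure Fp S2"
    by (rule measure_Fp_ge) (use sets in \<open>auto simp: S2_def\<close>)
  ultimately have "(exp K - 1) * measure Fm S2 \<le> Gm c - Gp c"
    by (simp add: measure_llr_greater_eq algebra_simps)
  then show ?thesis unfolding cdf_gap_def S2_def by linarith
next
  case False
  define S1 where "S1 = {y. L y < -K}"
  define S2 where "S2 = {y. -K \<le> L y \<and> L y \<le> c}"
  have sets: "S1 \<in> sets borel" "S2 \<in> sets borel" by (simp_all add: S1_def S2_def)
  have split: "{y. L y \<le> c} = S1 \<union> S2" "S1 \<inter> S2 = {}" using assms(2) by (auto simp: S1_def S2_def)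
  have "Gp c = measure Fp S1 + measure Fp S2"
    unfolding llr_cdf_eq split(1) by (rule Fp.finite_measure_Union) (use sets split in \<open>auto simp: sets_Fp\<close>)
  moreover have "Gm c = measure Fm S1 + measure Fm S2"
    unfolding llr_cdf_eq split(1) by (rule Fm.finite_measure_Union) (use sets split in \<open>auto simp: sets_Fm\<close>)
  moreover have "measure Fp S1 \<le> exp (-K) * measure Fm S1"
    by (rule measure_Fp_le) (use sets in \<open>auto simp: S1_def\<close>)
  moreover have "measure Fp S2 \<le> exp 0 * measure Fm S2"
    by (rule measure_Fp_le) (use sets False in \<open>auto simp: S2_def\<close>)
  ultimately have "(1 - exp (-K)) * measure Fm S1 \<le> Gm c - Gp c"
    by (simp add: algebra_simps)
  then show ?thesis unfolding cdf_gap_def S1_def by linarith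
qed

definition min_jump :: "real \<Rightarrow> real" where
  "min_jump K = exp (-K) * cdf_gap K / (1 + exp K)\<^sup>2"

lemma min_jump_pos: "0 < K \<Longrightarrow> 0 < min_jump K"
  unfolding min_jump_def using cdf_gap_pos[of K] by (intro divide_pos_pos mult_pos_pos) auto

lemma min_jump_le_abs_logistic_step:
  assumes "0 < K" and "\<bar>l\<bar> \<le> K" and "l' = l + Dp l \<or> l' = l + Dm l"
  shows "min_jump K \<le> \<bar>logistic l' - logistic l\<bar>"
proof -
  have gap: "cdf_gap K \<le> Gm (-l) - Gp (-l)" using cdf_gap_le assms(1,2) by simp
  obtain a b where ab: "0 < a" "a \<le> 1" "0 < b" "b \<le> 1" "cdf_gap K \<le> \<bar>a - b\<bar>" "l' = l + ln (a / b)"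
  proof (cases "l' = l + Dp l")
    case True
    show ?thesis
      by (rule that[of "1 - Gp (-l)" "1 - Gm (-l)"])
        (use True gap llr_cdf_Fp_bounds llr_cdf_Fm_bounds in \<open>auto simp: D_plus_def less_imp_le\<close>)
  next
    case False
    then show ?thesis
      by (intro that[of "Gp (-l)" "Gm (-l)"])
        (use assms(3) gap llr_cdf_Fp_bounds llr_cdf_Fm_bounds in \<open>auto simp: D_minus_def less_imp_le\<close>)
  qed
  have "exp (-K) * cdf_gap K / (1 + exp K)\<^sup>2 \<le> exp l * \<bar>a - b\<bar> / (1 + exp l)\<^sup>2"
  proof (rule frac_le)
    show "exp (-K) * cdf_gap K \<le> exp l * \<bar>a - b\<bar>"
      using assms(2) ab(5) cdf_gap_pos[OF assms(1)] by (intro mult_mono) auto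
    show "(1 + exp l)\<^sup>2 \<le> (1 + exp K)\<^sup>2"
      using assms(2) by (intro power_mono) auto
  qed simp_all
  also have "\<dots> \<le> \<bar>logistic l' - logistic l\<bar>"
    unfolding ab(6) by (rule abs_logistic_add_ln_ratio_ge) (use ab in auto)
  finally show ?thesis unfolding min_jump_def .
qed

lemma abs_tendsto_at_top_if_logistic_increments_tendsto_0:
  fixes l :: "nat \<Rightarrow> real"
  assumes step: "\<And>n. l (Suc n) = l n + Dp (l n) \<or> l (Suc n) = l n + Dm (l n)"
    and incr: "(\<lambda>n. logistic (l (Suc n)) - logistic (l n)) \<longlonglongrightarrow> 0"
  shows "filterlim (\<lambda>n. \<bar>l n\<bar>) at_top sequentially"
  unfolding filterlim_at_top_gt[where c=0]
proof (intro allI impI)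
  fix K :: real assume "0 < K"
  have "eventually (\<lambda>n. \<bar>logistic (l (Suc n)) - logistic (l n)\<bar> < min_jump K) sequentially"
    using tendstoD[OF incr min_jump_pos[OF \<open>0 < K\<close>]] by (simp add: dist_real_def)
  then show "eventually (\<lambda>n. K \<le> \<bar>l n\<bar>) sequentially"
    by (rule eventually_mono)
      (use min_jump_le_abs_logistic_step[OF \<open>0 < K\<close> _ step] in \<open>force simp: not_le[symmetric]\<close>)
qed

lemma increments_tendsto_0_if_tendsto_infinity:
  fixes l :: "nat \<Rightarrow> real"
  assumes step: "\<And>n. l (Suc n) = l n + Dp (l n) \<or> l (Suc n) = l n + Dm (l n)"
    and "filterlim l at_top sequentially \<or> filterlim l at_bot sequentially"
  shows "(\<lambda>n. l (Suc n) - l n) \<longlonglongrightarrow> 0"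
  using assms(2)
proof
  assume lim: "filterlim l at_top sequentially"
  then have "eventually (\<lambda>n. 0 < l n) sequentially" by (simp add: filterlim_at_top_dense)
  then have "eventually (\<lambda>n. 0 < l (Suc n)) sequentially"
    by (rule eventually_sequentially_Suc[THEN iffD2])
  then have "eventually (\<lambda>n. Dp (l n) = l (Suc n) - l n) sequentially"
    by (rule eventually_mono) (metis step add_D_minus_nonpos add_diff_cancel_left' not_le)
  moreover have "(\<lambda>n. Dp (l n)) \<longlonglongrightarrow> 0" using filterlim_compose[OF D_plus_tendsto_0 lim] .
  ultimately show ?thesis by (simp add: tendsto_cong)
next
  assume lim: "filterlim l at_bot sequentially"
  then have "eventually (\<lambda>n. l n < 0) sequentially" by (simp add: filterlim_at_bot_dense)
  then have "eventually (\<lambda>n. l (Suc n) < 0) sequentially"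
    by (rule eventually_sequentially_Suc[THEN iffD2])
  then have "eventually (\<lambda>n. Dm (l n) = l (Suc n) - l n) sequentially"
    by (rule eventually_mono) (metis step add_D_plus_nonneg add_diff_cancel_left' not_le)
  moreover have "(\<lambda>n. Dm (l n)) \<longlonglongrightarrow> 0" using filterlim_compose[OF D_minus_tendsto_0 lim] .
  ultimately show ?thesis by (simp add: tendsto_cong)
qed

lemma div_Suc_tendsto_0_if_logistic_increments_tendsto_0:
  fixes l :: "nat \<Rightarrow> real"
  assumes step: "\<And>n. l (Suc n) = l n + Dp (l n) \<or> l (Suc n) = l n + Dm (l n)"
    and incr: "(\<lambda>n. logistic (l (Suc n)) - logistic (l n)) \<longlonglongrightarrow> 0"
  shows "(\<lambda>n. l n / real (Suc n)) \<longlonglongrightarrow> 0"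
proof -
  have "filterlim (\<lambda>n. \<bar>l n\<bar>) at_top sequentially"
    using step incr by (rule abs_tendsto_at_top_if_logistic_increments_tendsto_0)
  then have "filterlim l at_top sequentially \<or> filterlim l at_bot sequentially"
    using incr by (rule tendsto_at_top_or_at_bot_if_logistic_increments_tendsto_0)
  then show ?thesis
    by (intro LIMSEQ_div_Suc_zero_if_increments_tendsto_zero increments_tendsto_0_if_tendsto_infinity step)
qed

end

section \<open>Histories of actions\<close>

abbreviation iid :: "real measure \<Rightarrow> (nat \<Rightarrow> real) measure" where
  "iid F \<equiv> PiM UNIV (\<lambda>_. F)"

lemma space_iid: "space F = UNIV \<Longrightarrow> space (iid F) = UNIV"
  by (auto simp: space_PiM PiE_def extensional_def)

lemma finite_bool_lists_length [simp]: "finite {h :: bool list. length h = n}"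
  using finite_lists_length_eq[of "UNIV :: bool set" n] by simp

lemma sum_bool_lists_length_Suc:
  fixes f :: "bool list \<Rightarrow> 'a :: comm_monoid_add"
  shows "(\<Sum>h | length h = Suc n. f h) = (\<Sum>h | length h = n. f (True # h) + f (False # h))"
proof -
  have lists: "{h :: bool list. length h = Suc n} = (\<lambda>(h, a). a # h) ` ({h. length h = n} \<times> UNIV)"
    using lists_length_Suc_eq[of "UNIV :: bool set" n] by simp
  have "inj_on (\<lambda>(h, a). a # h) ({h :: bool list. length h = n} \<times> UNIV)"
    by (auto simp: inj_on_def)
  then have "(\<Sum>h | length h = Suc n. f h) = (\<Sum>(h, a) \<in> {h. length h = n} \<times> UNIV. f (a # h))"
    unfolding lists by (subst sum.reindex[OF \<open>inj_on _ _\<close>]) (simp add: comp_def case_prod_beta)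
  also have "\<dots> = (\<Sum>h | length h = n. f (True # h) + f (False # h))"
    by (simp add: sum.cartesian_product[symmetric] UNIV_bool add.commute)
  finally show ?thesis .
qed

context llr_signals
begin

text \<open>Histories list the actions taken so far, most recent first, with \<open>True\<close> for action \<open>+1\<close>.\<close>

fun history_llr :: "bool list \<Rightarrow> real" where
  "history_llr [] = 0"
| "history_llr (a # h) =
     (if a then history_llr h + Dp (history_llr h) else history_llr h + Dm (history_llr h))"

fun history :: "nat \<Rightarrow> (nat \<Rightarrow> real) \<Rightarrow> bool list" where
  "history 0 x = []"
| "history (Suc n) x = (0 < history_llr (history n x) + L (x n)) # history n x"

lemma length_history [simp]: "length (history n x) = n"
  by (induction n) auto

lemma pub_llr_eq_history_llr: "pub_llr Fp Fm L x n = history_llr (history n x)"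
  by (induction n) auto

definition action_set :: "real \<Rightarrow> bool \<Rightarrow> real set" where
  "action_set c a = {y. (0 < c + L y) = a}"

text \<open>The signals of agent \<open>k\<close> (counted from the oldest) that are compatible with the history \<open>h\<close>.\<close>

definition history_constraint :: "bool list \<Rightarrow> nat \<Rightarrow> real set" where
  "history_constraint h k = action_set (history_llr (drop (length h - k) h)) (rev h ! k)"

lemma action_set_eq: "action_set c True = {y. -c < L y}" "action_set c False = {y. L y \<le> -c}"
  by (auto simp: action_set_def)

lemma action_set_sets [measurable]: "action_set c a \<in> sets borel"
  by (cases a) (simp_all add: action_set_eq)

lemma history_constraint_sets [measurable]: "history_constraint h k \<in> sets borel"
  by (simp add: history_constraint_def)

lemma history_constraint_Cons:
  assumes "length h = n"
  shows "k < n \<Longrightarrow> history_constraint (a # h) k = history_constraint h k"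
    and "history_constraint (a # h) n = action_set (history_llr h) a"
  using assms by (auto simp: history_constraint_def nth_append Suc_diff_le)

lemma history_eq_iff:
  "length h = n \<Longrightarrow> history n x = h \<longleftrightarrow> (\<forall>k<n. x k \<in> history_constraint h k)"
proof (induction n arbitrary: h)
  case (Suc n)
  then obtain a h' where h: "h = a # h'" and n: "length h' = n" by (cases h) auto
  have "history (Suc n) x = h \<longleftrightarrow> history n x = h' \<and> x n \<in> action_set (history_llr h') a"
    by (auto simp: h action_set_def)
  also have "\<dots> \<longleftrightarrow> (\<forall>k<Suc n. x k \<in> history_constraint h k)"
    using Suc.IH[OF n] history_constraint_Cons[OF n] by (auto simp: h less_Suc_eq)
  finally show ?case .
qed simp

definition history_event :: "nat \<Rightarrow> bool list \<Rightarrow> (nat \<Rightarrow> real) set" where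
  "history_event n h = {x. history n x = h}"

lemma history_event_eq_prod_emb:
  assumes "sets F = sets borel" and "length h = n"
  shows "history_event n h = prod_emb UNIV (\<lambda>_. F) {..<n} (PiE {..<n} (history_constraint h))"
proof -
  have "space F = UNIV" using sets_eq_imp_space_eq[OF assms(1)] by simp
  then show ?thesis
    unfolding history_event_def prod_emb_def space_iid[OF \<open>space F = UNIV\<close>]
    using history_eq_iff[OF assms(2)] by (auto simp: restrict_PiE_iff)
qed

lemma history_event_sets [measurable]:
  assumes "sets F = sets borel"
  shows "history_event n h \<in> sets (iid F)"
proof (cases "length h = n")
  case True
  then show ?thesis unfolding history_event_eq_prod_emb[OF assms True]
    by (intro sets_PiM_I) (auto simp: assms)
next
  case False
  then have "history_event n h = {}" by (auto simp: history_event_def)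
  then show ?thesis by simp
qed

fun likelihood :: "real measure \<Rightarrow> bool list \<Rightarrow> real" where
  "likelihood F [] = 1"
| "likelihood F (a # h) = measure F (action_set (history_llr h) a) * likelihood F h"

lemma likelihood_nonneg: "0 \<le> likelihood F h"
  by (induction h) auto

lemma emeasure_history_event:
  assumes "prob_space F" and "sets F = sets borel" and "length h = n"
  shows "emeasure (iid F) (history_event n h) = likelihood F h"
proof -
  interpret prob_space F by fact
  have "emeasure (iid F) (history_event n h) = (\<Prod>k<n. emeasure F (history_constraint h k))"
    unfolding history_event_eq_prod_emb[OF assms(2,3)]
    by (rule emeasure_PiM_emb) (auto simp: assms(1,2) prob_space_axioms)
  also have "\<dots> = ennreal (\<Prod>k<n. measure F (history_constraint h k))"
    by (simp add: emeasure_eq_measure prod_ennreal)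
  also have "(\<Prod>k<n. measure F (history_constraint h k)) = likelihood F h"
    using assms(3)
  proof (induction n arbitrary: h)
    case (Suc n)
    then obtain a h' where h: "h = a # h'" and n: "length h' = n" by (cases h) auto
    then show ?case using Suc.IH[OF n] history_constraint_Cons[OF n] by simp
  qed simp
  finally show ?thesis .
qed

lemma measure_action_set:
  assumes "prob_space F" and "sets F = sets borel"
  shows "measure F (action_set c True) = 1 - llr_cdf F L (-c)"
    and "measure F (action_set c False) = llr_cdf F L (-c)"
  using measure_llr_greater[OF assms L_measurable, of "-c"]
    sets_eq_imp_space_eq[OF assms(2)] by (simp_all add: action_set_eq llr_cdf_def)

lemma likelihood_Cons_sum:
  assumes "prob_space F" and "sets F = sets borel"
  shows "likelihood F (True # h) + likelihood F (False # h) = likelihood F h"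
  by (simp add: measure_action_set[OF assms] algebra_simps)

lemma sum_likelihood:
  assumes "prob_space F" and "sets F = sets borel"
  shows "(\<Sum>h | length h = n. likelihood F h) = 1"
proof (induction n)
  case 0
  have "{h :: bool list. length h = 0} = {[]}" by auto
  then show ?case by simp
next
  case (Suc n)
  then show ?case unfolding sum_bool_lists_length_Suc likelihood_Cons_sum[OF assms] .
qed

lemma likelihood_Fp_eq: "likelihood Fp h = exp (history_llr h) * likelihood Fm h"
proof (induction h)
  case (Cons a h)
  define c where "c = history_llr h"
  have bounds: "0 < Gp (-c)" "Gp (-c) < 1" "0 < Gm (-c)" "Gm (-c) < 1"
    using llr_cdf_Fp_bounds llr_cdf_Fm_bounds by auto
  note measure_action_set[OF Fp.prob_space_axioms sets_Fp]
    measure_action_set[OF Fm.prob_space_axioms sets_Fm]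
  with Cons bounds show ?case
    by (cases a) (simp_all add: c_def[symmetric] D_plus_def D_minus_def exp_add)
qed simp

section \<open>The public belief is a martingale\<close>

text \<open>Twice the probability of a history when the state is drawn uniformly.\<close>

definition mixture_likelihood :: "bool list \<Rightarrow> real" where
  "mixture_likelihood h = likelihood Fp h + likelihood Fm h"

definition belief :: "bool list \<Rightarrow> real" where
  "belief h = logistic (history_llr h)"

lemma mixture_likelihood_nonneg: "0 \<le> mixture_likelihood h"
  by (simp add: mixture_likelihood_def add_nonneg_nonneg likelihood_nonneg)

lemma mixture_likelihood_Cons_sum:
  "mixture_likelihood (True # h) + mixture_likelihood (False # h) = mixture_likelihood h"
  using likelihood_Cons_sum[OF Fp.prob_space_axioms sets_Fp, of h]
    likelihood_Cons_sum[OF Fm.prob_space_axioms sets_Fm, of h]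
  by (simp add: mixture_likelihood_def)

lemma belief_mult_mixture_likelihood: "belief h * mixture_likelihood h = likelihood Fp h"
  by (simp add: belief_def logistic_def mixture_likelihood_def likelihood_Fp_eq field_simps)

lemma belief_martingale:
  "mixture_likelihood (True # h) * belief (True # h) + mixture_likelihood (False # h) * belief (False # h)
   = mixture_likelihood h * belief h"
  using likelihood_Cons_sum[OF Fp.prob_space_axioms sets_Fp, of h]
  by (simp only: mult.commute[of "mixture_likelihood _"] belief_mult_mixture_likelihood)

lemma belief_increments_identity:
  "mixture_likelihood (True # h) * (belief (True # h) - belief h)\<^sup>2
     + mixture_likelihood (False # h) * (belief (False # h) - belief h)\<^sup>2
   = mixture_likelihood (True # h) * (belief (True # h))\<^sup>2
     + mixture_likelihood (False # h) * (belief (False # h))\<^sup>2 - mixture_likelihood h * (belief h)\<^sup>2"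
proof -
  have "mixture_likelihood (True # h) * (belief (True # h) - belief h)\<^sup>2
          + mixture_likelihood (False # h) * (belief (False # h) - belief h)\<^sup>2
        = mixture_likelihood (True # h) * (belief (True # h))\<^sup>2
          + mixture_likelihood (False # h) * (belief (False # h))\<^sup>2
          - 2 * belief h * (mixture_likelihood (True # h) * belief (True # h)
                            + mixture_likelihood (False # h) * belief (False # h))
          + (belief h)\<^sup>2 * (mixture_likelihood (True # h) + mixture_likelihood (False # h))"
    by (simp add: power2_eq_square algebra_simps)
  then show ?thesis
    unfolding belief_martingale mixture_likelihood_Cons_sum by (simp add: power2_eq_square)
qed

definition belief_moment :: "nat \<Rightarrow> real" where
  "belief_moment n = (\<Sum>h | length h = n. mixture_likelihood h * (belief h)\<^sup>2)"

lemma sum_sq_belief_increments: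
  "(\<Sum>h | length h = Suc n. mixture_likelihood h * (belief h - belief (tl h))\<^sup>2)
   = belief_moment (Suc n) - belief_moment n"
  unfolding belief_moment_def sum_bool_lists_length_Suc
  by (simp add: belief_increments_identity sum_subtractf)

lemma belief_moment_bounds: "0 \<le> belief_moment n" "belief_moment n \<le> 2"
proof -
  have "0 \<le> mixture_likelihood h * (belief h)\<^sup>2" for h
    using mixture_likelihood_nonneg by simp
  then show "0 \<le> belief_moment n" unfolding belief_moment_def by (simp add: sum_nonneg)
  have "mixture_likelihood h * (belief h)\<^sup>2 \<le> mixture_likelihood h" for h
    using mixture_likelihood_nonneg[of h] logistic_bounds[of "history_llr h"]
    by (simp add: belief_def mult_left_le power_le_one)
  then have "belief_moment n \<le> (\<Sum>h | length h = n. mixture_likelihood h)"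
    unfolding belief_moment_def by (rule sum_mono)
  also have "\<dots> = 2"
    using sum_likelihood[OF Fp.prob_space_axioms sets_Fp] sum_likelihood[OF Fm.prob_space_axioms sets_Fm]
    by (simp add: mixture_likelihood_def sum.distrib)
  finally show "belief_moment n \<le> 2" .
qed

lemma fun_history_eq_sum:
  fixes f :: "bool list \<Rightarrow> 'a :: semiring_1"
  shows "f (history n x) = (\<Sum>h | length h = n. f h * indicator (history_event n h) x)"
proof -
  have "(\<Sum>h | length h = n. f h * indicator (history_event n h) x)
      = (\<Sum>h | length h = n. if h = history n x then f h else 0)"
    by (intro sum.cong) (auto simp: history_event_def)
  then show ?thesis by simp
qed

lemma measurable_fun_history [measurable]:
  fixes f :: "bool list \<Rightarrow> real"
  assumes "sets F = sets borel"
  shows "(\<lambda>x. f (history n x)) \<in> borel_measurable (iid F)"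
proof -
  have "(\<lambda>x. f (history n x)) = (\<lambda>x. \<Sum>h | length h = n. f h * indicator (history_event n h) x)"
    by (rule ext) (rule fun_history_eq_sum)
  then show ?thesis
    by (simp only:) (intro borel_measurable_sum borel_measurable_times borel_measurable_const
        borel_measurable_indicator history_event_sets[OF assms])
qed

lemma nn_integral_fun_history:
  fixes f :: "bool list \<Rightarrow> real"
  assumes F: "prob_space F" "sets F = sets borel" and f: "\<And>h. 0 \<le> f h"
  shows "(\<integral>\<^sup>+ x. f (history n x) \<partial>iid F) = (\<Sum>h | length h = n. f h * likelihood F h)"
proof -
  have [measurable]: "history_event n h \<in> sets (iid F)" for h
    using history_event_sets[OF F(2)] .
  have "(\<integral>\<^sup>+ x. f (history n x) \<partial>iid F)
      = (\<integral>\<^sup>+ x. (\<Sum>h | length h = n. ennreal (f h) * indicator (history_event n h) x) \<partial>iid F)"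
    by (subst fun_history_eq_sum[of "\<lambda>h. ennreal (f h)"]) simp
  also have "\<dots> = (\<Sum>h | length h = n. \<integral>\<^sup>+ x. ennreal (f h) * indicator (history_event n h) x \<partial>iid F)"
    by (rule nn_integral_sum) measurable
  also have "\<dots> = (\<Sum>h | length h = n. ennreal (f h) * emeasure (iid F) (history_event n h))"
    by (intro sum.cong refl nn_integral_cmult_indicator) measurable
  also have "\<dots> = (\<Sum>h | length h = n. ennreal (f h * likelihood F h))"
    using f by (intro sum.cong) (simp_all add: emeasure_history_event[OF F] ennreal_mult likelihood_nonneg)
  also have "\<dots> = (\<Sum>h | length h = n. f h * likelihood F h)"
    using f likelihood_nonneg by (intro sum_ennreal) simp
  finally show ?thesis .
qed

definition belief_increment :: "nat \<Rightarrow> (nat \<Rightarrow> real) \<Rightarrow> real" where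
  "belief_increment n x = belief (history (Suc n) x) - belief (history n x)"

lemma tl_history_Suc [simp]: "tl (history (Suc n) x) = history n x"
  by simp

lemma measurable_belief_increment [measurable]:
  "sets F = sets borel \<Longrightarrow> belief_increment n \<in> borel_measurable (iid F)"
  using measurable_fun_history[of F "\<lambda>h. belief h - belief (tl h)" "Suc n"]
  by (simp add: belief_increment_def[abs_def] del: history.simps)

lemma nn_integral_sq_belief_increment:
  "(\<integral>\<^sup>+ x. (belief_increment n x)\<^sup>2 \<partial>iid Fp) + (\<integral>\<^sup>+ x. (belief_increment n x)\<^sup>2 \<partial>iid Fm)
   = belief_moment (Suc n) - belief_moment n"
proof -
  define g where "g h = (belief h - belief (tl h))\<^sup>2" for h
  have "(\<integral>\<^sup>+ x. (belief_increment n x)\<^sup>2 \<partial>iid F) = (\<Sum>h | length h = Suc n. g h * likelihood F h)"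
    if "prob_space F" "sets F = sets borel" for F
    using nn_integral_fun_history[OF that, of g "Suc n"]
    by (simp add: g_def belief_increment_def del: history.simps)
  then have "(\<integral>\<^sup>+ x. (belief_increment n x)\<^sup>2 \<partial>iid Fp) + (\<integral>\<^sup>+ x. (belief_increment n x)\<^sup>2 \<partial>iid Fm)
      = ennreal (\<Sum>h | length h = Suc n. g h * likelihood Fp h)
        + ennreal (\<Sum>h | length h = Suc n. g h * likelihood Fm h)"
    using Fp.prob_space_axioms Fm.prob_space_axioms sets_Fp sets_Fm by simp
  also have "\<dots> = ennreal (\<Sum>h | length h = Suc n. mixture_likelihood h * g h)"
    by (subst ennreal_plus[symmetric])
      (auto simp: g_def mixture_likelihood_def sum.distrib algebra_simps likelihood_nonneg intro!: sum_nonneg)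
  finally show ?thesis by (simp add: g_def sum_sq_belief_increments)
qed

lemma belief_moment_mono: "belief_moment n \<le> belief_moment (Suc n)"
proof -
  have "0 \<le> (\<Sum>h | length h = Suc n. mixture_likelihood h * (belief h - belief (tl h))\<^sup>2)"
    by (intro sum_nonneg mult_nonneg_nonneg mixture_likelihood_nonneg) simp
  then show ?thesis by (simp add: sum_sq_belief_increments)
qed

lemma nn_integral_sum_sq_belief_increments_le:
  assumes "F \<in> {Fp, Fm}"
  shows "(\<integral>\<^sup>+ x. (\<Sum>n. ennreal ((belief_increment n x)\<^sup>2)) \<partial>iid F) \<le> 2"
proof -
  have sets_F: "sets F = sets borel" using assms sets_Fp sets_Fm by auto
  define I where "I n = (\<integral>\<^sup>+ x. (belief_increment n x)\<^sup>2 \<partial>iid F)" for n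
  have I_le: "I n \<le> belief_moment (Suc n) - belief_moment n" for n
    using assms nn_integral_sq_belief_increment[of n, symmetric]
    by (auto simp: I_def intro: add_increasing add_increasing2)
  have "(\<integral>\<^sup>+ x. (\<Sum>n. ennreal ((belief_increment n x)\<^sup>2)) \<partial>iid F) = (SUP N. \<Sum>n<N. I n)"
    unfolding I_def using sets_F by (subst nn_integral_suminf) (simp_all add: suminf_eq_SUP)
  also have "\<dots> \<le> 2"
  proof (rule SUP_least)
    fix N
    have "(\<Sum>n<N. I n) \<le> (\<Sum>n<N. ennreal (belief_moment (Suc n) - belief_moment n))"
      by (intro sum_mono I_le)
    also have "\<dots> = ennreal (belief_moment N - belief_moment 0)"
      using belief_moment_mono by (simp add: sum_ennreal sum_lessThan_telescope)
    also have "\<dots> \<le> 2"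
      using belief_moment_bounds[of N] belief_moment_bounds[of 0] ennreal_leI[of _ 2] by simp
    finally show "(\<Sum>n<N. I n) \<le> 2" .
  qed
  finally show ?thesis .
qed

lemma AE_belief_increment_tendsto_0:
  assumes "F \<in> {Fp, Fm}"
  shows "AE x in iid F. (\<lambda>n. belief_increment n x) \<longlonglongrightarrow> 0"
proof -
  have sets_F: "sets F = sets borel" using assms sets_Fp sets_Fm by auto
  have "AE x in iid F. (\<Sum>n. ennreal ((belief_increment n x)\<^sup>2)) \<noteq> \<infinity>"
    using nn_integral_sum_sq_belief_increments_le[OF assms] sets_F by (intro nn_integral_PInf_AE) (auto simp: top_unique)
  then show ?thesis
  proof (rule eventually_mono)
    fix x assume "(\<Sum>n. ennreal ((belief_increment n x)\<^sup>2)) \<noteq> \<infinity>"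
    then have "summable (\<lambda>n. (belief_increment n x)\<^sup>2)"
      by (intro summable_suminf_not_top) auto
    then have "(\<lambda>n. sqrt ((belief_increment n x)\<^sup>2)) \<longlonglongrightarrow> sqrt 0"
      by (intro tendsto_real_sqrt summable_LIMSEQ_zero)
    then show "(\<lambda>n. belief_increment n x) \<longlonglongrightarrow> 0"
      by (simp add: tendsto_rabs_zero_iff)
  qed
qed

lemma AE_pub_llr_div_Suc_tendsto_0:
  assumes "F \<in> {Fp, Fm}"
  shows "AE x in iid F. (\<lambda>n. pub_llr Fp Fm L x n / real (Suc n)) \<longlonglongrightarrow> 0"
  using AE_belief_increment_tendsto_0[OF assms]
proof (rule eventually_mono)
  fix x assume "(\<lambda>n. belief_increment n x) \<longlonglongrightarrow> 0"
  then have "(\<lambda>n. history_llr (history n x) / real (Suc n)) \<longlonglongrightarrow> 0"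
    by (intro div_Suc_tendsto_0_if_logistic_increments_tendsto_0)
      (simp_all add: belief_increment_def belief_def)
  then show "(\<lambda>n. pub_llr Fp Fm L x n / real (Suc n)) \<longlonglongrightarrow> 0"
    by (simp add: pub_llr_eq_history_llr)
qed

end

section \<open>Signals of a randomly drawn state\<close>

locale signal_mixture =
  M: prob_space M + Fp: prob_space Fp + Fm: prob_space Fm
  for M :: "'w measure" and Fp Fm :: "real measure" +
  fixes \<theta> :: "'w \<Rightarrow> int" and X :: "'w \<Rightarrow> nat \<Rightarrow> real"
  assumes sets_Fp: "sets Fp = sets borel" and sets_Fm: "sets Fm = sets borel"
    and state_measurable [measurable]: "\<theta> \<in> M \<rightarrow>\<^sub>M count_space UNIV"
    and state_values: "\<forall>\<omega>\<in>space M. \<theta> \<omega> \<in> {-1, 1}"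
    and signals_measurable [measurable]: "X \<in> M \<rightarrow>\<^sub>M iid borel"
    and signals_law: "\<forall>A \<in> sets (iid borel).
           measure M {\<omega> \<in> space M. \<theta> \<omega> = 1 \<and> X \<omega> \<in> A} = 1/2 * measure (iid Fp) A
         \<and> measure M {\<omega> \<in> space M. \<theta> \<omega> = -1 \<and> X \<omega> \<in> A} = 1/2 * measure (iid Fm) A"
begin

lemma null_sets_state_event:
  assumes "(c = 1 \<and> F = Fp) \<or> (c = -1 \<and> F = Fm)" and N: "N \<in> null_sets (iid F)"
  shows "{\<omega> \<in> space M. \<theta> \<omega> = c \<and> X \<omega> \<in> N} \<in> null_sets M"
proof -
  have "sets (iid F) = sets (iid borel)"
    using assms(1) by (auto intro!: sets_PiM_cong simp: sets_Fp sets_Fm)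
  then have [measurable]: "N \<in> sets (iid borel)" using N by auto
  have "measure M {\<omega> \<in> space M. \<theta> \<omega> = c \<and> X \<omega> \<in> N} = 1/2 * measure (iid F) N"
    using signals_law assms(1) by auto
  also have "\<dots> = 0" using N by (simp add: measure_eq_0_null_sets)
  finally show ?thesis by (intro null_setsI) (simp_all add: M.emeasure_eq_measure)
qed

lemma AE_signals_if_AE_iid:
  assumes "AE x in iid Fp. P x" and "AE x in iid Fm. P x"
  shows "AE \<omega> in M. P (X \<omega>)"
proof -
  obtain Np where Np: "Np \<in> null_sets (iid Fp)" "{x \<in> space (iid Fp). \<not> P x} \<subseteq> Np"
    using assms(1) unfolding eventually_ae_filter by blast
  obtain Nm where Nm: "Nm \<in> null_sets (iid Fm)" "{x \<in> space (iid Fm). \<not> P x} \<subseteq> Nm"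
    using assms(2) unfolding eventually_ae_filter by blast
  show ?thesis
  proof (rule AE_I')
    show "{\<omega> \<in> space M. \<theta> \<omega> = 1 \<and> X \<omega> \<in> Np} \<union> {\<omega> \<in> space M. \<theta> \<omega> = -1 \<and> X \<omega> \<in> Nm} \<in> null_sets M"
      by (intro null_sets.Un null_sets_state_event) (use Np(1) Nm(1) in auto)
    have "space (iid Fp) = UNIV" "space (iid Fm) = UNIV"
      using sets_eq_imp_space_eq[OF sets_Fp] sets_eq_imp_space_eq[OF sets_Fm] by (simp_all add: space_iid)
    then have "X \<omega> \<in> Np" "X \<omega> \<in> Nm" if "\<not> P (X \<omega>)" for \<omega>
      using that Np(2) Nm(2) by blast+
    then show "{\<omega> \<in> space M. \<not> P (X \<omega>)}
        \<subseteq> {\<omega> \<in> space M. \<theta> \<omega> = 1 \<and> X \<omega> \<in> Np} \<union> {\<omega> \<in> space M. \<theta> \<omega> = -1 \<and> X \<omega> \<in> Nm}"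
      using state_values by fastforce
  qed
qed

lemma measure_Fm_pos_if_signal_event_pos:
  assumes "absolutely_continuous Fm Fp" and R: "R \<in> sets borel"
    and "0 < measure M {\<omega> \<in> space M. X \<omega> t \<in> R}"
  shows "0 < measure Fm R"
proof (rule ccontr)
  assume "\<not> 0 < measure Fm R"
  then have "AE y in Fm. y \<notin> R"
    using Fm.prob_eq_0[of R] measure_nonneg[of Fm R] R by (simp add: sets_Fm)
  moreover from this have "AE y in Fp. y \<notin> R"
    using absolutely_continuous_AE[OF _ assms(1)] by (simp add: sets_Fp sets_Fm)
  ultimately have "AE \<omega> in M. X \<omega> t \<notin> R"
    by (intro AE_signals_if_AE_iid AE_PiM_component) (auto intro: Fp.prob_space_axioms Fm.prob_space_axioms)
  moreover have "{\<omega> \<in> space M. X \<omega> t \<in> R} \<in> sets M" using R by measurable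
  ultimately have "measure M {\<omega> \<in> space M. X \<omega> t \<in> R} = 0" by (simp add: M.prob_Collect_eq_0)
  with assms(3) show False by simp
qed

end

theorem theorem1:
  fixes M :: "'w measure" and \<theta> :: "'w \<Rightarrow> int" and s :: "nat \<Rightarrow> 'w \<Rightarrow> real"
    and Fp Fm :: "real measure" and L :: "real \<Rightarrow> real"
  assumes "prob_space M"
    and "prob_space Fp" and "prob_space Fm"
    and "sets Fp = sets borel" and "sets Fm = sets borel"
    and "absolutely_continuous Fp Fm" and "absolutely_continuous Fm Fp"
    and "\<theta> \<in> M \<rightarrow>\<^sub>M count_space UNIV" and "\<forall>\<omega>\<in>space M. \<theta> \<omega> \<in> {-1, 1}"
    and "(\<lambda>\<omega> t. s t \<omega>) \<in> M \<rightarrow>\<^sub>M PiM UNIV (\<lambda>_. borel)"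
    and "\<forall>A \<in> sets (PiM UNIV (\<lambda>_::nat. borel :: real measure)).
           measure M {\<omega> \<in> space M. \<theta> \<omega> = 1 \<and> (\<lambda>t. s t \<omega>) \<in> A}
             = 1/2 * measure (PiM UNIV (\<lambda>_. Fp)) A
         \<and> measure M {\<omega> \<in> space M. \<theta> \<omega> = -1 \<and> (\<lambda>t. s t \<omega>) \<in> A}
             = 1/2 * measure (PiM UNIV (\<lambda>_. Fm)) A"
    and "L \<in> borel_measurable borel"
    and "Fp = density Fm (\<lambda>x. ennreal (exp (L x)))"
    and "\<forall>t K. measure M {\<omega> \<in> space M. L (s t \<omega>) > K} > 0
             \<and> measure M {\<omega> \<in> space M. L (s t \<omega>) < - K} > 0"
  shows "AE \<omega> in M. (\<lambda>n. pub_llr Fp Fm L (\<lambda>t. s t \<omega>) n / real (Suc n)) \<longlonglongrightarrow> 0"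
proof -
  interpret signal_mixture M Fp Fm \<theta> "\<lambda>\<omega> t. s t \<omega>"
    by (intro signal_mixture.intro signal_mixture_axioms.intro assms)
  have L_events: "{y. K < L y} \<in> sets borel" "{y. L y < K} \<in> sets borel" for K
    using assms(12) by measurable
  have above: "0 < measure Fm {y. K < L y}" for K
    using assms(14) by (intro measure_Fm_pos_if_signal_event_pos[OF assms(7) L_events(1), of 0]) simp
  have below: "0 < measure Fm {y. L y < K}" for K
    using assms(14)[rule_format, where t=0 and K="-K"]
    by (intro measure_Fm_pos_if_signal_event_pos[OF assms(7) L_events(2), of 0]) simp
  interpret llr_signals Fp Fm L
    by (intro llr_signals.intro llr_signals_axioms.intro assms above below)
  show ?thesis
    using AE_signals_if_AE_iid[of "\<lambda>x. (\<lambda>n. pub_llr Fp Fm L x n / real (Suc n)) \<longlonglongrightarrow> 0"]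
      AE_pub_llr_div_Suc_tendsto_0 by simp
qed

end
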